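(* Let $N\ge2$ and $0\le k\le N$. For complex $\xi_1,\dots,\xi_N$ with $|\xi_i|<1$ for all $i$, \[ \sum_{\sigma\in S_N}\operatorname{sgn}(\sigma)\prod_{j=1}^{k}\Big(\frac{1-\xi_j}{1-\xi_{\sigma(j)}}\Big)^{j-1}\prod_{j=k+1}^{N}\Big(\frac{1-\xi_j}{1-\xi_{\sigma(j)}}\Big)^{j-2}\cdot\frac{\prod_{j=2}^N\xi_{\sigma(j)}^{\,j-1}}{\prod_{m=k+1}^{N}\Big(1-\prod_{l=m}^N\xi_{\sigma(l)}\Big)} =\prod_{i=1}^k(1-\xi_i)\prod_{1\le i<j\le N}\frac{\xi_j-\xi_i}{1-\xi_i}\prod_{i=1}^N\frac{1}{1-\xi_i}, \] where empty products equal $1$. *)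

theory Defs
  imports "HOL-Analysis.Analysis" "HOL-Combinatorics.Permutations"
begin

end

theory Submission
  imports Defs "Jordan_Normal_Form.Determinant" "HOL-Computational_Algebra.Polynomial"
begin

text \<open>
  The factors \<open>(1 - \<xi> j) powi e\<close> of the summand do not depend on \<open>\<sigma>\<close>; pulling them
  out leaves an alternating sum \<open>S k\<close> over permutations (\<open>reduced_sum\<close>). For \<open>k \<ge> 1\<close>
  the difference \<open>S (k - 1) - S k\<close> is, term by term, an alternating sum of terms symmetric
  in \<open>\<sigma> k\<close> and \<open>\<sigma> (k + 1)\<close>, which vanishes because composing with the transposition
  of \<open>k\<close> and \<open>k + 1\<close> flips the sign. Hence \<open>S k = S N\<close>; at \<open>k = N\<close> all denominators
  disappear and \<open>S N\<close> is the Vandermonde determinant in the variables \<open>\<xi> i / (1 - \<xi> i)\<close>.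
  The hypothesis \<open>norm (\<xi> i) < 1\<close> only keeps the denominators \<open>1 - \<xi> (\<sigma> m) \<cdots> \<xi> (\<sigma> N)\<close>
  away from zero.
\<close>

definition Newton_poly :: "(nat \<Rightarrow> 'a :: comm_ring_1) \<Rightarrow> nat \<Rightarrow> 'a poly" where
  "Newton_poly z j = (\<Prod>l=0..<j. [:- z l, 1:])"

lemma degree_Newton_poly: "degree (Newton_poly (z :: nat \<Rightarrow> 'a :: idom) j) = j"
  unfolding Newton_poly_def by (subst degree_prod_sum_eq) auto

lemma lead_coeff_Newton_poly: "coeff (Newton_poly (z :: nat \<Rightarrow> 'a :: idom) j) j = 1"
  using lead_coeff_prod[of "\<lambda>l. [:- z l, 1:]" "{0..<j}"] degree_Newton_poly[of z j]
  unfolding Newton_poly_def by simp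

lemma poly_Newton_poly: "poly (Newton_poly z j) x = (\<Prod>l=0..<j. (x - z l))"
  unfolding Newton_poly_def poly_prod by simp

lemma det_Vandermonde_mat:
  fixes z :: "nat \<Rightarrow> 'a :: idom"
  shows "det (mat n n (\<lambda>(i,j). z i ^ j)) = (\<Prod>i=0..<n. \<Prod>l=0..<i. (z i - z l))"
proof -
  \<comment> \<open>Multiplying by the unitriangular coefficient matrix \<open>U\<close> of the Newton basis makes
    the matrix lower triangular.\<close>
  define A where "A = mat n n (\<lambda>(i,j). z i ^ j)"
  define U where "U = mat n n (\<lambda>(c,j). coeff (Newton_poly z j) c)"
  have A: "A \<in> carrier_mat n n" and U: "U \<in> carrier_mat n n" by (auto simp: A_def U_def)
  have AU: "(A * U) $$ (i,j) = (\<Prod>l=0..<j. (z i - z l))" if "i < n" "j < n" for i j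
  proof -
    have "(A * U) $$ (i,j) = (\<Sum>c=0..<n. z i ^ c * coeff (Newton_poly z j) c)"
      using that A U by (simp add: A_def U_def scalar_prod_def row_def col_def)
    also have "\<dots> = (\<Sum>c\<le>degree (Newton_poly z j). coeff (Newton_poly z j) c * z i ^ c)"
      by (subst sum.mono_neutral_right[of "{0..<n}" "{..degree (Newton_poly z j)}"])
         (use that degree_Newton_poly[of z j] in \<open>auto simp: coeff_eq_0 mult.commute\<close>)
    also have "\<dots> = (\<Prod>l=0..<j. (z i - z l))" by (simp add: poly_altdef[symmetric] poly_Newton_poly)
    finally show ?thesis .
  qed
  have "det (A * U) = prod_list (diag_mat (A * U))"
  proof (rule det_lower_triangular[of n])
    fix i j assume "i < j" "j < n"
    then show "(A * U) $$ (i,j) = 0" by (simp add: AU) (auto intro!: prod_zero bexI[of _ i])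
  qed (use A U in auto)
  also have "diag_mat (A * U) = map (\<lambda>i. \<Prod>l=0..<i. (z i - z l)) [0..<n]"
    using A U unfolding diag_mat_def by (intro map_cong) (auto simp: AU simp del: index_mult_mat(1))
  finally have det_AU: "det (A * U) = (\<Prod>i=0..<n. \<Prod>l=0..<i. (z i - z l))"
    by (simp add: prod.distinct_set_conv_list[symmetric])
  have "det U = prod_list (diag_mat U)"
    by (rule det_upper_triangular[OF _ U])
       (auto simp: upper_triangular_def U_def coeff_eq_0 degree_Newton_poly)
  also have "diag_mat U = map (\<lambda>i. 1) [0..<n]"
    unfolding diag_mat_def U_def by (intro map_cong) (auto simp: lead_coeff_Newton_poly)
  finally have "det U = 1" by (simp add: prod.distinct_set_conv_list[symmetric])
  then show ?thesis using det_AU det_mult[OF A U] by (simp add: A_def)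
qed

lemma Vandermonde_Leibniz_0:
  fixes z :: "nat \<Rightarrow> 'a :: idom"
  shows "(\<Sum>p | p permutes {0..<n}. of_int (sign p) * (\<Prod>i=0..<n. z (p i) ^ i))
       = (\<Prod>i=0..<n. \<Prod>l=0..<i. (z i - z l))"
proof -
  let ?A = "mat n n (\<lambda>(i,j). z i ^ j)"
  have A: "?A \<in> carrier_mat n n" by simp
  have "det ?A = (\<Sum>p | p permutes {0..<n}. of_int (sign p) * (\<Prod>i=0..<n. z (p i) ^ i))"
    by (subst det_transpose[OF A, symmetric], subst det_def'[of _ n])
       (auto simp: permutes_in_image intro!: sum.cong prod.cong)
  then show ?thesis using det_Vandermonde_mat[of n z] by simp
qed

lemma sum_permutes_reindex:
  assumes f: "bij_betw f A B"
  shows "(\<Sum>\<sigma> | \<sigma> permutes B. g \<sigma>) = (\<Sum>p | p permutes A. g (map_permutation A f p))"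
proof -
  have f': "bij_betw (inv_into A f) B A" using bij_betw_inv_into[OF f] .
  have "bij_betw (map_permutation A f) {p. p permutes A} {\<sigma>. \<sigma> permutes B}"
  proof (rule bij_betwI[where g="map_permutation B (inv_into A f)"])
    show "map_permutation B (inv_into A f) (map_permutation A f p) = p"
      if "p \<in> {p. p permutes A}" for p
      using that f by (intro map_permutation_compose_inv) (auto simp: bij_betw_def)
    show "map_permutation A f (map_permutation B (inv_into A f) \<sigma>) = \<sigma>"
      if "\<sigma> \<in> {\<sigma>. \<sigma> permutes B}" for \<sigma>
      using that f' f by (intro map_permutation_compose_inv) (auto simp: bij_betw_def f_inv_into_f)
  qed (use map_permutation_permutes f f' in auto)
  then show ?thesis by (rule sum.reindex_bij_betw[symmetric])
qed

lemma Vandermonde_Leibniz: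
  fixes y :: "nat \<Rightarrow> 'a :: idom"
  shows "(\<Sum>\<sigma> | \<sigma> permutes {1..N}. of_int (sign \<sigma>) * (\<Prod>j=1..N. y (\<sigma> j) ^ (j - 1)))
       = (\<Prod>j=1..N. \<Prod>i=1..<j. (y j - y i))"
proof -
  have Suc: "bij_betw Suc {0..<N} {1..N}"
    by (rule bij_betwI[where g="\<lambda>x. x - 1"]) auto
  have shift: "(\<Prod>j=1..N. h j) = (\<Prod>i=0..<N. h (Suc i))" for h :: "nat \<Rightarrow> 'a"
    by (rule prod.reindex_bij_betw[OF Suc, symmetric])
  have "(\<Sum>\<sigma> | \<sigma> permutes {1..N}. of_int (sign \<sigma>) * (\<Prod>j=1..N. y (\<sigma> j) ^ (j - 1)))
      = (\<Sum>p | p permutes {0..<N}. of_int (sign p) * (\<Prod>i=0..<N. y (Suc (p i)) ^ i))"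
  proof (subst sum_permutes_reindex[OF Suc], intro sum.cong refl)
    fix p assume "p \<in> {p. p permutes {0..<N}}"
    then show "of_int (sign (map_permutation {0..<N} Suc p))
          * (\<Prod>j=1..N. y (map_permutation {0..<N} Suc p j) ^ (j - 1))
        = of_int (sign p) * (\<Prod>i=0..<N. y (Suc (p i)) ^ i)"
      unfolding shift by (simp add: sign_map_permutation map_permutation_apply)
  qed
  also have "\<dots> = (\<Prod>i=0..<N. \<Prod>l=0..<i. (y (Suc i) - y (Suc l)))"
    by (rule Vandermonde_Leibniz_0)
  also have "\<dots> = (\<Prod>j=1..N. \<Prod>i=1..<j. (y j - y i))"
    unfolding shift unfolding One_nat_def prod.atLeast_Suc_lessThan_Suc_shift by (simp add: comp_def)
  finally show ?thesis .
qed

lemma sum_sign_permutes_eq_0_if_transpose_invariant: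
  fixes g :: "('b \<Rightarrow> 'b) \<Rightarrow> 'a :: {idom, ring_char_0}"
  assumes "finite S" "a \<in> S" "b \<in> S" "a \<noteq> b"
    and invariant: "\<And>\<sigma>. \<sigma> permutes S \<Longrightarrow> g (\<sigma> \<circ> Transposition.transpose a b) = g \<sigma>"
  shows "(\<Sum>\<sigma> | \<sigma> permutes S. of_int (sign \<sigma>) * g \<sigma>) = 0"
proof -
  have \<tau>: "Transposition.transpose a b permutes S" using assms by (intro permutes_swap_id)
  have sign: "sign (\<sigma> \<circ> Transposition.transpose a b) = - sign \<sigma>" if "\<sigma> permutes S" for \<sigma>
  proof -
    have "permutation \<sigma>" using permutes_imp_permutation[OF assms(1) that] .
    then show ?thesis using assms(4) by (simp add: sign_compose permutation_swap_id sign_swap_id)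
  qed
  define X where "X = (\<Sum>\<sigma> | \<sigma> permutes S. of_int (sign \<sigma>) * g \<sigma>)"
  have "X = (\<Sum>\<sigma> | \<sigma> permutes S. of_int (sign (\<sigma> \<circ> Transposition.transpose a b)) * g (\<sigma> \<circ> Transposition.transpose a b))"
    unfolding X_def by (rule sum_permutations_compose_right[OF \<tau>])
  also have "\<dots> = - X"
    unfolding X_def sum_negf[symmetric] by (intro sum.cong) (simp_all add: sign invariant)
  finally show ?thesis unfolding X_def by simp
qed

lemma norm_prod_less_1:
  fixes f :: "'b \<Rightarrow> 'a :: {real_normed_algebra_1, comm_monoid_mult}"
  assumes "finite A" "A \<noteq> {}" "\<And>x. x \<in> A \<Longrightarrow> norm (f x) < 1"
  shows "norm (prod f A) < 1"
proof -
  obtain i where "i \<in> A" using assms(2) by blast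
  have "norm (prod f A) \<le> (\<Prod>x\<in>A. norm (f x))" by (rule norm_prod_le)
  also have "\<dots> < (\<Prod>x\<in>A. 1)"
    using \<open>i \<in> A\<close> assms by (intro prod_mono_strict) (auto simp: less_imp_le)
  finally show ?thesis by simp
qed

text \<open>
  \<open>reduced_term \<xi> N k \<sigma>\<close> is the \<open>\<sigma>\<close>-summand of the theorem (without the sign) divided by
  the \<open>\<sigma>\<close>-independent factor \<open>\<Prod>j=1..N. (1 - \<xi> j) powi reduced_exponent k j\<close>.
\<close>

definition reduced_exponent :: "nat \<Rightarrow> nat \<Rightarrow> int" where
  "reduced_exponent k j = (if j \<le> k then int j - 1 else int j - 2)"

definition tail_prod :: "(nat \<Rightarrow> 'a :: comm_monoid_mult) \<Rightarrow> nat \<Rightarrow> (nat \<Rightarrow> nat) \<Rightarrow> nat \<Rightarrow> 'a" where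
  "tail_prod \<xi> N \<sigma> m = (\<Prod>l=m..N. \<xi> (\<sigma> l))"

definition tail_denominator :: "(nat \<Rightarrow> 'a :: comm_ring_1) \<Rightarrow> nat \<Rightarrow> nat \<Rightarrow> (nat \<Rightarrow> nat) \<Rightarrow> 'a" where
  "tail_denominator \<xi> N k \<sigma> = (\<Prod>m=k+1..N. (1 - tail_prod \<xi> N \<sigma> m))"

definition reduced_numerator :: "(nat \<Rightarrow> 'a :: field) \<Rightarrow> nat \<Rightarrow> nat \<Rightarrow> (nat \<Rightarrow> nat) \<Rightarrow> 'a" where
  "reduced_numerator \<xi> N k \<sigma> =
     (\<Prod>j=1..N. (1 / (1 - \<xi> (\<sigma> j))) powi reduced_exponent k j * \<xi> (\<sigma> j) ^ (j - 1))"

definition reduced_term :: "(nat \<Rightarrow> 'a :: field) \<Rightarrow> nat \<Rightarrow> nat \<Rightarrow> (nat \<Rightarrow> nat) \<Rightarrow> 'a" where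
  "reduced_term \<xi> N k \<sigma> = reduced_numerator \<xi> N k \<sigma> / tail_denominator \<xi> N k \<sigma>"

definition reduced_sum :: "(nat \<Rightarrow> 'a :: field) \<Rightarrow> nat \<Rightarrow> nat \<Rightarrow> 'a" where
  "reduced_sum \<xi> N k = (\<Sum>\<sigma> | \<sigma> permutes {1..N}. of_int (sign \<sigma>) * reduced_term \<xi> N k \<sigma>)"

text \<open>
  The extra factor \<open>x\<close> at \<open>j = k\<close> makes \<open>swap_factor k k = swap_factor k (k + 1)\<close>, so
  \<open>swap_term\<close> is invariant under exchanging \<open>\<sigma> k\<close> and \<open>\<sigma> (k + 1)\<close>.
\<close>

definition swap_factor :: "nat \<Rightarrow> nat \<Rightarrow> 'a :: field \<Rightarrow> 'a" where
  "swap_factor k j x = (1 / (1 - x)) powi reduced_exponent k j * x ^ (j - 1) * (if j = k then x else 1)"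

definition swap_term :: "(nat \<Rightarrow> 'a :: field) \<Rightarrow> nat \<Rightarrow> nat \<Rightarrow> (nat \<Rightarrow> nat) \<Rightarrow> 'a" where
  "swap_term \<xi> N k \<sigma> =
     (\<Prod>j=1..N. swap_factor k j (\<xi> (\<sigma> j))) / ((1 - tail_prod \<xi> N \<sigma> k) * tail_denominator \<xi> N (k+1) \<sigma>)"

lemma tail_prod_Suc: "m \<le> N \<Longrightarrow> tail_prod \<xi> N \<sigma> m = \<xi> (\<sigma> m) * tail_prod \<xi> N \<sigma> (Suc m)"
  unfolding tail_prod_def by (simp add: prod.atLeast_Suc_atMost)

lemma tail_denominator_Suc:
  "k < N \<Longrightarrow> tail_denominator \<xi> N k \<sigma> = (1 - tail_prod \<xi> N \<sigma> (Suc k)) * tail_denominator \<xi> N (Suc k) \<sigma>"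
  unfolding tail_denominator_def by (simp add: prod.atLeast_Suc_atMost)

lemma reduced_numerator_pred:
  fixes \<xi> :: "nat \<Rightarrow> 'a :: field"
  assumes "k \<in> {1..N}" "1 - \<xi> (\<sigma> k) \<noteq> 0"
  shows "reduced_numerator \<xi> N (k-1) \<sigma> = reduced_numerator \<xi> N k \<sigma> * (1 - \<xi> (\<sigma> k))"
proof -
  have "(1 / (1 - \<xi> (\<sigma> j))) powi reduced_exponent (k-1) j
      = (1 / (1 - \<xi> (\<sigma> j))) powi reduced_exponent k j * (if j = k then 1 - \<xi> (\<sigma> k) else 1)" for j
  proof (cases "j = k")
    case True
    then have "reduced_exponent (k-1) j = reduced_exponent k j - 1"
      using assms(1) by (auto simp: reduced_exponent_def)
    then show ?thesis using True assms(2) by (simp add: power_int_diff)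
  qed (auto simp: reduced_exponent_def)
  then show ?thesis
    unfolding reduced_numerator_def using assms(1) by (simp add: prod.distrib ac_simps)
qed

lemma swap_term_transpose:
  fixes \<xi> :: "nat \<Rightarrow> 'a :: field"
  assumes "1 \<le> k" "k < N"
  shows "swap_term \<xi> N k (\<sigma> \<circ> Transposition.transpose k (k+1)) = swap_term \<xi> N k \<sigma>"
proof -
  let ?\<tau> = "Transposition.transpose k (k+1)"
  have \<tau>: "?\<tau> permutes {1..N}" "?\<tau> permutes {k..N}"
    using assms by (auto intro: permutes_swap_id)
  have "swap_factor k k = (swap_factor k (k+1) :: 'a \<Rightarrow> 'a)"
  proof
    fix x :: 'a
    have "x ^ (k - 1) * x = x ^ (k + 1 - 1)" using assms(1) by (cases k) (auto simp: mult.commute)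
    then show "swap_factor k k x = swap_factor k (k+1) x"
      unfolding swap_factor_def reduced_exponent_def by (simp add: mult.assoc)
  qed
  then have factor: "swap_factor k (?\<tau> j) = (swap_factor k j :: 'a \<Rightarrow> 'a)" for j
    by (cases "j = k"; cases "j = k+1") auto
  have "(\<Prod>j=1..N. swap_factor k j (\<xi> ((\<sigma> \<circ> ?\<tau>) j))) = (\<Prod>j=1..N. swap_factor k j (\<xi> (\<sigma> j)))"
    using prod.permute[OF \<tau>(1), of "\<lambda>j. swap_factor k j (\<xi> (\<sigma> j))"] by (simp only: factor comp_def)
  moreover have "tail_prod \<xi> N (\<sigma> \<circ> ?\<tau>) k = tail_prod \<xi> N \<sigma> k"
    unfolding tail_prod_def using prod.permute[OF \<tau>(2), of "\<lambda>l. \<xi> (\<sigma> l)"] by (simp add: comp_def)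
  moreover have "tail_denominator \<xi> N (k+1) (\<sigma> \<circ> ?\<tau>) = tail_denominator \<xi> N (k+1) \<sigma>"
    unfolding tail_denominator_def tail_prod_def
    by (intro prod.cong refl arg_cong2[where f = minus]) (auto simp: transpose_apply_other)
  ultimately show ?thesis unfolding swap_term_def by simp
qed

lemma reduced_sum_top:
  fixes \<xi> :: "nat \<Rightarrow> 'a :: field"
  shows "reduced_sum \<xi> N N = (\<Prod>j=1..N. \<Prod>i=1..<j. (\<xi> j / (1 - \<xi> j) - \<xi> i / (1 - \<xi> i)))"
proof -
  have "(1 / (1 - x)) powi reduced_exponent N j * x ^ (j - 1) = (x / (1 - x)) ^ (j - 1)"
    if "j \<in> {1..N}" for j and x :: 'a
  proof -
    have "reduced_exponent N j = int (j - 1)" using that by (simp add: reduced_exponent_def)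
    then show ?thesis by (simp add: power_divide)
  qed
  then have "reduced_term \<xi> N N \<sigma> = (\<Prod>j=1..N. (\<xi> (\<sigma> j) / (1 - \<xi> (\<sigma> j))) ^ (j - 1))" for \<sigma>
    unfolding reduced_term_def tail_denominator_def reduced_numerator_def by simp
  then show ?thesis
    unfolding reduced_sum_def using Vandermonde_Leibniz[of "\<lambda>i. \<xi> i / (1 - \<xi> i)" N] by simp
qed

context
  fixes \<xi> :: "nat \<Rightarrow> 'a :: real_normed_field" and N :: nat
  assumes small: "\<And>i. i \<in> {1..N} \<Longrightarrow> norm (\<xi> i) < 1"
begin

lemma one_minus_perm_nonzero: "\<sigma> permutes {1..N} \<Longrightarrow> j \<in> {1..N} \<Longrightarrow> 1 - \<xi> (\<sigma> j) \<noteq> 0"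
  using small[of "\<sigma> j"] permutes_in_image[of \<sigma> "{1..N}" j] by auto

lemma one_minus_tail_prod_nonzero:
  assumes "\<sigma> permutes {1..N}" "1 \<le> m" "m \<le> N"
  shows "1 - tail_prod \<xi> N \<sigma> m \<noteq> 0"
proof -
  have "norm (tail_prod \<xi> N \<sigma> m) < 1"
    unfolding tail_prod_def using assms
    by (intro norm_prod_less_1 small permutes_in_image[OF assms(1), THEN iffD2]) auto
  then show ?thesis by auto
qed

lemma tail_denominator_nonzero: "\<sigma> permutes {1..N} \<Longrightarrow> tail_denominator \<xi> N k \<sigma> \<noteq> 0"
  unfolding tail_denominator_def using one_minus_tail_prod_nonzero[of \<sigma>] by (subst prod_zero_iff) auto

lemma reduced_term_diff:
  assumes \<sigma>: "\<sigma> permutes {1..N}" and k: "1 \<le> k" "k \<le> N"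
  shows "reduced_term \<xi> N (k-1) \<sigma> - reduced_term \<xi> N k \<sigma> = (if k < N then - swap_term \<xi> N k \<sigma> else 0)"
proof -
  define x where "x = \<xi> (\<sigma> k)"
  define p where "p = tail_prod \<xi> N \<sigma> (k+1)"
  define R where "R = reduced_numerator \<xi> N k \<sigma>"
  have kin: "k \<in> {1..N}" using k by auto
  have one_minus_x: "1 - x \<noteq> 0" using one_minus_perm_nonzero[OF \<sigma> kin] by (simp add: x_def)
  have numerator: "reduced_numerator \<xi> N (k-1) \<sigma> = R * (1 - x)"
    unfolding R_def x_def using kin one_minus_x by (intro reduced_numerator_pred) (simp_all add: x_def)
  have tail_k: "tail_prod \<xi> N \<sigma> k = x * p"
    unfolding x_def p_def using tail_prod_Suc[of k N \<xi> \<sigma>] k by simp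
  have denominator: "tail_denominator \<xi> N (k-1) \<sigma> = (1 - x * p) * tail_denominator \<xi> N k \<sigma>"
    using tail_denominator_Suc[of "k-1" N \<xi> \<sigma>] k tail_k by simp
  show ?thesis
  proof (cases "k < N")
    case True
    define d where "d = tail_denominator \<xi> N (k+1) \<sigma>"
    have denominator': "tail_denominator \<xi> N k \<sigma> = (1 - p) * d"
      unfolding p_def d_def using tail_denominator_Suc[of k N \<xi> \<sigma>] True by simp
    have nonzero: "1 - x * p \<noteq> 0" "1 - p \<noteq> 0" "d \<noteq> 0"
      using one_minus_tail_prod_nonzero[OF \<sigma>] tail_denominator_nonzero[OF \<sigma>] True k tail_k
      by (auto simp: p_def d_def)
    have swap_numerator: "(\<Prod>j=1..N. swap_factor k j (\<xi> (\<sigma> j))) = R * x"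
      unfolding swap_factor_def reduced_numerator_def x_def R_def using kin by (simp add: prod.distrib)
    have "reduced_term \<xi> N (k-1) \<sigma> - reduced_term \<xi> N k \<sigma>
        = R * (1 - x) / ((1 - x * p) * ((1 - p) * d)) - R / ((1 - p) * d)"
      unfolding reduced_term_def numerator denominator denominator' R_def ..
    also have "\<dots> = - (R * x / ((1 - x * p) * d))"
    proof -
      have "R * (1 - x) - R * (1 - x * p) = - (R * x) * (1 - p)"
        by (simp add: algebra_simps)
      then show ?thesis
        using nonzero by (simp add: diff_divide_distrib[symmetric] divide_simps)
    qed
    also have "\<dots> = - swap_term \<xi> N k \<sigma>"
      unfolding swap_term_def swap_numerator tail_k d_def ..
    finally show ?thesis using True by simp
  next
    case False
    then have "p = 1" "tail_denominator \<xi> N k \<sigma> = 1"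
      unfolding tail_prod_def tail_denominator_def p_def using k by auto
    then show ?thesis
      unfolding reduced_term_def numerator denominator using False one_minus_x by (simp add: R_def)
  qed
qed

lemma reduced_sum_pred:
  assumes k: "1 \<le> k" "k \<le> N"
  shows "reduced_sum \<xi> N (k-1) = reduced_sum \<xi> N k"
proof -
  have "reduced_sum \<xi> N (k-1) - reduced_sum \<xi> N k
      = (\<Sum>\<sigma> | \<sigma> permutes {1..N}. of_int (sign \<sigma>) * (if k < N then - swap_term \<xi> N k \<sigma> else 0))"
    unfolding reduced_sum_def sum_subtractf[symmetric] right_diff_distrib[symmetric]
  proof (intro sum.cong refl)
    fix \<sigma> assume "\<sigma> \<in> {\<sigma>. \<sigma> permutes {1..N}}"
    then show "of_int (sign \<sigma>) * (reduced_term \<xi> N (k-1) \<sigma> - reduced_term \<xi> N k \<sigma>)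
        = of_int (sign \<sigma>) * (if k < N then - swap_term \<xi> N k \<sigma> else 0)"
      by (simp only: mem_Collect_eq reduced_term_diff[OF _ k])
  qed
  also have "\<dots> = 0"
  proof (cases "k < N")
    case True
    have "(\<Sum>\<sigma> | \<sigma> permutes {1..N}. of_int (sign \<sigma>) * swap_term \<xi> N k \<sigma>) = 0"
      using k True
      by (intro sum_sign_permutes_eq_0_if_transpose_invariant[of "{1..N}" k "k+1"] swap_term_transpose) auto
    then show ?thesis using True by (simp add: sum_negf)
  qed simp
  finally show ?thesis by simp
qed

lemma reduced_sum_eq_top: "k \<le> N \<Longrightarrow> reduced_sum \<xi> N k = reduced_sum \<xi> N N"
proof (induction k rule: inc_induct)
  case (step n)
  then show ?case using reduced_sum_pred[of "Suc n"] by simp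
qed simp

end

lemma lhs_eq_prefactor_reduced_sum:
  fixes \<xi> :: "nat \<Rightarrow> 'a :: field"
  assumes "k \<le> N"
  shows "(\<Sum>\<sigma> | \<sigma> permutes {1..N}.
            of_int (sign \<sigma>)
          * (\<Prod>j=1..k. ((1 - \<xi> j) / (1 - \<xi> (\<sigma> j))) powi (int j - 1))
          * (\<Prod>j=k+1..N. ((1 - \<xi> j) / (1 - \<xi> (\<sigma> j))) powi (int j - 2))
          * ((\<Prod>j=2..N. \<xi> (\<sigma> j) ^ (j - 1))
             / (\<Prod>m=k+1..N. (1 - (\<Prod>l=m..N. \<xi> (\<sigma> l))))))
       = (\<Prod>j=1..N. (1 - \<xi> j) powi reduced_exponent k j) * reduced_sum \<xi> N k"
  unfolding reduced_sum_def sum_distrib_left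
proof (intro sum.cong refl)
  fix \<sigma> :: "nat \<Rightarrow> nat"
  have "{1..N} = {1..k} \<union> {k+1..N}" using assms by auto
  then have split: "(\<Prod>j=1..N. g j) = (\<Prod>j=1..k. g j) * (\<Prod>j=k+1..N. g j)" for g :: "nat \<Rightarrow> 'a"
    by (simp add: prod.union_disjoint)
  have "(\<Prod>j=1..k. ((1 - \<xi> j) / (1 - \<xi> (\<sigma> j))) powi (int j - 1))
      * (\<Prod>j=k+1..N. ((1 - \<xi> j) / (1 - \<xi> (\<sigma> j))) powi (int j - 2))
      = (\<Prod>j=1..N. ((1 - \<xi> j) / (1 - \<xi> (\<sigma> j))) powi reduced_exponent k j)"
    unfolding split by (intro arg_cong2[where f = times] prod.cong refl) (auto simp: reduced_exponent_def)
  also have "\<dots> = (\<Prod>j=1..N. (1 - \<xi> j) powi reduced_exponent k j)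
                 * (\<Prod>j=1..N. (1 / (1 - \<xi> (\<sigma> j))) powi reduced_exponent k j)"
    by (simp add: prod.distrib[symmetric] power_int_divide_distrib)
  finally have exponents: "(\<Prod>j=1..k. ((1 - \<xi> j) / (1 - \<xi> (\<sigma> j))) powi (int j - 1))
      * (\<Prod>j=k+1..N. ((1 - \<xi> j) / (1 - \<xi> (\<sigma> j))) powi (int j - 2))
      = (\<Prod>j=1..N. (1 - \<xi> j) powi reduced_exponent k j)
        * (\<Prod>j=1..N. (1 / (1 - \<xi> (\<sigma> j))) powi reduced_exponent k j)" .
  have powers: "(\<Prod>j=2..N. \<xi> (\<sigma> j) ^ (j - 1)) = (\<Prod>j=1..N. \<xi> (\<sigma> j) ^ (j - 1))"
    by (cases N) (simp_all add: prod.atLeast_Suc_atMost numeral_2_eq_2)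
  show "of_int (sign \<sigma>)
          * (\<Prod>j=1..k. ((1 - \<xi> j) / (1 - \<xi> (\<sigma> j))) powi (int j - 1))
          * (\<Prod>j=k+1..N. ((1 - \<xi> j) / (1 - \<xi> (\<sigma> j))) powi (int j - 2))
          * ((\<Prod>j=2..N. \<xi> (\<sigma> j) ^ (j - 1))
             / (\<Prod>m=k+1..N. (1 - (\<Prod>l=m..N. \<xi> (\<sigma> l)))))
      = (\<Prod>j=1..N. (1 - \<xi> j) powi reduced_exponent k j) * (of_int (sign \<sigma>) * reduced_term \<xi> N k \<sigma>)"
    unfolding mult.assoc[of "of_int (sign \<sigma>)"] exponents powers
    by (simp add: reduced_term_def reduced_numerator_def tail_denominator_def tail_prod_def
                  prod.distrib)
qed

lemma Vandermonde_divide_one_minus: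
  fixes \<xi> :: "nat \<Rightarrow> 'a :: field"
  assumes "\<And>i. i \<in> {1..N} \<Longrightarrow> \<xi> i \<noteq> 1"
  shows "(\<Prod>j=1..N. \<Prod>i=1..<j. (\<xi> j / (1 - \<xi> j) - \<xi> i / (1 - \<xi> i)))
       = (\<Prod>j=1..N. \<Prod>i=1..<j. (\<xi> j - \<xi> i) / (1 - \<xi> i)) * (\<Prod>j=1..N. (1 / (1 - \<xi> j)) ^ (j - 1))"
proof -
  have row: "(\<Prod>i=1..<j. (\<xi> j / (1 - \<xi> j) - \<xi> i / (1 - \<xi> i)))
      = (\<Prod>i=1..<j. (\<xi> j - \<xi> i) / (1 - \<xi> i)) * (1 / (1 - \<xi> j)) ^ (j - 1)"
    if j: "j \<in> {1..N}" for j
  proof -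
    have "(\<Prod>i=1..<j. (\<xi> j / (1 - \<xi> j) - \<xi> i / (1 - \<xi> i)))
        = (\<Prod>i=1..<j. (\<xi> j - \<xi> i) / (1 - \<xi> i) * (1 / (1 - \<xi> j)))"
    proof (rule prod.cong[OF refl])
      fix i assume "i \<in> {1..<j}"
      then have "1 - \<xi> i \<noteq> 0" "1 - \<xi> j \<noteq> 0" using assms j by auto
      then show "\<xi> j / (1 - \<xi> j) - \<xi> i / (1 - \<xi> i) = (\<xi> j - \<xi> i) / (1 - \<xi> i) * (1 / (1 - \<xi> j))"
        by (simp add: field_simps)
    qed
    then show ?thesis by (simp only: prod.distrib prod_constant card_atLeastLessThan)
  qed
  show ?thesis
    unfolding prod.distrib[symmetric] by (rule prod.cong[OF refl]) (rule row)
qed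

lemma prod_powi_reduced_exponent_mult:
  fixes \<xi> :: "nat \<Rightarrow> 'a :: field"
  assumes "k \<le> N" "\<And>i. i \<in> {1..N} \<Longrightarrow> \<xi> i \<noteq> 1"
  shows "(\<Prod>j=1..N. (1 - \<xi> j) powi reduced_exponent k j) * (\<Prod>j=1..N. (1 / (1 - \<xi> j)) ^ (j - 1))
       = (\<Prod>i=1..k. (1 - \<xi> i)) * (\<Prod>i=1..N. 1 / (1 - \<xi> i))"
proof -
  have factor: "(1 - \<xi> j) powi reduced_exponent k j * (1 / (1 - \<xi> j)) ^ (j - 1)
      = (if j \<le> k then 1 - \<xi> j else 1) * (1 / (1 - \<xi> j))" if "j \<in> {1..N}" for j
  proof -
    have "1 - \<xi> j \<noteq> 0" using assms(2)[OF that] by simp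
    moreover have "reduced_exponent k j = int (j - 1) + (if j \<le> k then 0 else - 1)"
      using that by (simp add: reduced_exponent_def)
    ultimately show ?thesis
      by (simp add: power_int_add power_one_over field_simps)
  qed
  have "(\<Prod>j=1..N. (1 - \<xi> j) powi reduced_exponent k j) * (\<Prod>j=1..N. (1 / (1 - \<xi> j)) ^ (j - 1))
      = (\<Prod>j=1..N. (if j \<le> k then 1 - \<xi> j else 1) * (1 / (1 - \<xi> j)))"
    unfolding prod.distrib[symmetric] by (rule prod.cong[OF refl]) (rule factor)
  also have "\<dots> = (\<Prod>j=1..N. if j \<le> k then 1 - \<xi> j else 1) * (\<Prod>i=1..N. 1 / (1 - \<xi> i))"
    by (rule prod.distrib)
  also have "(\<Prod>j=1..N. if j \<le> k then 1 - \<xi> j else 1) = (\<Prod>j\<in>{j\<in>{1..N}. j \<le> k}. 1 - \<xi> j)"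
    by (rule prod.inter_filter[symmetric]) simp
  also have "{j\<in>{1..N}. j \<le> k} = {1..k}" using assms(1) by auto
  finally show ?thesis .
qed

theorem lemma3p1:
  fixes N k :: nat and \<xi> :: "nat \<Rightarrow> complex"
  assumes "N \<ge> 2" and "k \<le> N"
    and "\<And>i. i \<in> {1..N} \<Longrightarrow> cmod (\<xi> i) < 1"
  shows "(\<Sum>\<sigma> | \<sigma> permutes {1..N}.
            of_int (sign \<sigma>)
          * (\<Prod>j=1..k. ((1 - \<xi> j) / (1 - \<xi> (\<sigma> j))) powi (int j - 1))
          * (\<Prod>j=k+1..N. ((1 - \<xi> j) / (1 - \<xi> (\<sigma> j))) powi (int j - 2))
          * ((\<Prod>j=2..N. \<xi> (\<sigma> j) ^ (j - 1))
             / (\<Prod>m=k+1..N. (1 - (\<Prod>l=m..N. \<xi> (\<sigma> l))))))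
       = (\<Prod>i=1..k. (1 - \<xi> i))
         * (\<Prod>j=1..N. \<Prod>i=1..<j. (\<xi> j - \<xi> i) / (1 - \<xi> i))
         * (\<Prod>i=1..N. 1 / (1 - \<xi> i))"
proof -
  have not_one: "\<xi> i \<noteq> 1" if "i \<in> {1..N}" for i using assms(3)[OF that] by auto
  let ?C = "\<Prod>j=1..N. (1 - \<xi> j) powi reduced_exponent k j"
  let ?D = "\<Prod>j=1..N. (1 / (1 - \<xi> j)) ^ (j - 1)"
  let ?V = "\<Prod>j=1..N. \<Prod>i=1..<j. (\<xi> j - \<xi> i) / (1 - \<xi> i)"
  have "reduced_sum \<xi> N k = reduced_sum \<xi> N N"
    by (rule reduced_sum_eq_top) (use assms in auto)
  also have "\<dots> = (\<Prod>j=1..N. \<Prod>i=1..<j. (\<xi> j / (1 - \<xi> j) - \<xi> i / (1 - \<xi> i)))"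
    by (rule reduced_sum_top)
  also have "\<dots> = ?V * ?D"
    by (rule Vandermonde_divide_one_minus) (rule not_one)
  finally have "?C * reduced_sum \<xi> N k = ?V * (?C * ?D)"
    by (simp only: mult.left_commute)
  also have "?C * ?D = (\<Prod>i=1..k. (1 - \<xi> i)) * (\<Prod>i=1..N. 1 / (1 - \<xi> i))"
    by (rule prod_powi_reduced_exponent_mult) (use assms(2) not_one in auto)
  finally show ?thesis
    unfolding lhs_eq_prefactor_reduced_sum[OF assms(2)] by (simp only: ac_simps)
qed

end
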